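(* Let $k\ge 2$, $p\in(0,1)$, $q=1-p$. For all $n\ge 1$, $$M^{(k)}_n(p)=(k-1)n-\frac pq\sum_{i=0}^{n-1}\big(1-f^{(k)}_i\big).$$
   Context: Matchbox process: fix integers $k\ge 2$, $n\ge 1$ and $p\in(0,1)$, $q=1-p$. Initially $k$ boxes each contain $n$ matches. At each time step, independently, with probability $p$ a match is removed from a box currently containing the largest number of matches, and with probability $q$ from a box currently containing the smallest number (ties broken arbitrarily). The process is run until some box first becomes empty; the residue is the total number of matches in the other $k-1$ boxes at that time, and $M^{(k)}_n(p)$ is its expectation. Let $s^{(k)}_i=\frac{k-1}{ki-1}\binom{ki-1}{i-1}$ ($i\ge1$), $S^{(k)}(z)=\sum_{i\ge1}s^{(k)}_iz^i$, and define $f^{(k)}_0,f^{(k)}_1,\dots$ by the formal power series identity $\sum_{i\ge0}f^{(k)}_iz^i=\dfrac{1}{1-\frac1qS^{(k)}(p^{k-1}qz)}$. ($f^{(k)}_i$ is the probability that the process is in a state with all boxes equal after $ki$ steps.) *)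

theory Defs
  imports "HOL-Probability.Probability" "HOL-Computational_Algebra.Formal_Power_Series"
begin

text \<open>A state of the matchbox process is the multiset of box contents.
  Removing a match from "a box with the largest (smallest) number of matches"
  only depends on this multiset, so tie-breaking is irrelevant.\<close>

definition dec_max :: "nat multiset \<Rightarrow> nat multiset" where
  "dec_max s = s - {#Max (set_mset s)#} + {#Max (set_mset s) - 1#}"

definition dec_min :: "nat multiset \<Rightarrow> nat multiset" where
  "dec_min s = s - {#Min (set_mset s)#} + {#Min (set_mset s) - 1#}"

lemma dec_max_less:
  assumes "s \<noteq> {#}" "0 \<notin># s"
  shows "sum_mset (dec_max s) < sum_mset s"
proof -
  let ?m = "Max (set_mset s)"
  have mem: "?m \<in># s" using assms(1) by (simp add: Max_in)
  have pos: "?m > 0" using mem assms(2) by (cases "?m") auto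
  have "sum_mset s = sum_mset (s - {#?m#}) + ?m"
    using sum_mset.remove[OF mem] by simp
  then show ?thesis using pos unfolding dec_max_def by simp
qed

lemma dec_min_less:
  assumes "s \<noteq> {#}" "0 \<notin># s"
  shows "sum_mset (dec_min s) < sum_mset s"
proof -
  let ?m = "Min (set_mset s)"
  have mem: "?m \<in># s" using assms(1) by (simp add: Min_in)
  have pos: "?m > 0" using mem assms(2) by (cases "?m") auto
  have "sum_mset s = sum_mset (s - {#?m#}) + ?m"
    using sum_mset.remove[OF mem] by simp
  then show ?thesis using pos unfolding dec_min_def by simp
qed

text \<open>Distribution of the residue (total number of matches left, the empty box
  contributing 0) when the process is started in state s: with probability p
  (Bernoulli True) a match is taken from a largest box, otherwise from a smallest
  box; the process stops as soon as some box is empty.\<close>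

function residue_pmf :: "real \<Rightarrow> nat multiset \<Rightarrow> nat pmf" where
  "residue_pmf p s =
     (if s = {#} \<or> 0 \<in># s then return_pmf (sum_mset s)
      else bind_pmf (bernoulli_pmf p)
             (\<lambda>b. if b then residue_pmf p (dec_max s) else residue_pmf p (dec_min s)))"
  by auto
termination
  by (relation "Wellfounded.measure (\<lambda>(p, s). sum_mset s)")
     (auto intro: dec_max_less dec_min_less)

definition M :: "nat \<Rightarrow> nat \<Rightarrow> real \<Rightarrow> real" where
  "M k n p = measure_pmf.expectation (residue_pmf p (replicate_mset k n)) real"

definition s_coeff :: "nat \<Rightarrow> nat \<Rightarrow> real" where
  "s_coeff k i = (real k - 1) / (real (k * i) - 1) * real ((k * i - 1) choose (i - 1))"

definition S_fps :: "nat \<Rightarrow> real fps" where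
  "S_fps k = Abs_fps (\<lambda>i. if i = 0 then 0 else s_coeff k i)"

definition f_coeff :: "nat \<Rightarrow> real \<Rightarrow> nat \<Rightarrow> real" where
  "f_coeff k p i =
     fps_nth (inverse (1 - fps_const (1 / (1 - p)) *
        fps_compose (S_fps k) (fps_const (p ^ (k - 1) * (1 - p)) * fps_X))) i"

end

theory Submission
  imports Defs
begin

text \<open>Write c = k - 1 and q = 1 - p. Started from k equal boxes, the process only visits
  states in which one box holds L matches, the minimum, while the other c boxes share
  c L + D matches as evenly as possible. A step at a largest box lowers the surplus D by one,
  a step at the smallest box lowers L by one and raises D by c. Conditioning on the first step
  shows that the expected residue from such a state is
  (c - p/q) L + D + (p/q) sum_{m<L} K_m(D), where K_m(D) is the probability that the process,
  run without stopping, is balanced (D = 0) after exactly m steps at a smallest box.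
  Cutting at the first return of D to 0 gives a renewal equation for K_m(0): its step law is
  one step out of the balanced state followed by the first passage of the surplus from c
  down to 0, and by the ballot theorem its generating function is (1/q) S(p^c q z).
  Hence K_m(0) = f_m.\<close>

text \<open>Ballot numbers: for D > 0, the number of paths with steps -1 and +c that start at D,
  use u steps +c and reach 0 only at their end.\<close>


definition passage_count :: "nat \<Rightarrow> nat \<Rightarrow> nat \<Rightarrow> real" where
  "passage_count c D u = (if u = 0 then 1 else
     real ((D + Suc c * u - 1) choose u) - real c * real ((D + Suc c * u - 1) choose (u - 1)))"

lemma passage_count_closed_form:
  "real (D + Suc c * u) * passage_count c D u = real D * real ((D + Suc c * u) choose u)"
proof (cases u)
  case 0
  then show ?thesis by (simp add: passage_count_def)
next
  case (Suc u')
  define t where "t = D + Suc c * u"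
  have t: "t = Suc (t - 1)" using Suc by (simp add: t_def)
  have lower: "t * ((t - 1) choose (u - 1)) = u * (t choose u)"
    using Suc_times_binomial[of u' "t - 1"] t Suc by simp
  have upper: "t * ((t - 1) choose u) = (D + c * u) * (t choose u)"
    using binomial_absorb_comp[of t u] by (simp add: t_def)
  have "real t * passage_count c D u
      = real (t * ((t - 1) choose u)) - real c * real (t * ((t - 1) choose (u - 1)))"
    using Suc by (simp add: passage_count_def t_def algebra_simps)
  also have "\<dots> = real D * real (t choose u)"
    unfolding lower upper by (simp add: algebra_simps)
  finally show ?thesis by (simp add: t_def)
qed

lemma passage_count_0_right [simp]: "passage_count c D 0 = 1"
  by (simp add: passage_count_def)

lemma passage_count_0_left:
  assumes "u > 0"
  shows "passage_count c 0 u = 0"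
proof -
  have "real (Suc c * u) * passage_count c 0 u = 0"
    using passage_count_closed_form[of 0 c u] by simp
  moreover have "real (Suc c * u) > 0" using assms by (subst of_nat_0_less_iff) simp
  ultimately show ?thesis by simp
qed

lemma passage_count_Suc_Suc:
  "passage_count c (Suc D) (Suc u) = passage_count c D (Suc u) + passage_count c (Suc D + c) u"
proof (cases u)
  case 0
  then show ?thesis by (simp add: passage_count_def)
next
  case (Suc v)
  define t where "t = D + Suc c * Suc u - 1"
  have "D + Suc c * Suc u = Suc t" "Suc D + c + Suc c * u - 1 = t"
    using Suc by (simp_all add: t_def)
  then show ?thesis
    using Suc by (simp add: passage_count_def algebra_simps)
qed

lemma passage_count_eq_s_coeff:
  assumes "c > 0" "j > 0"
  shows "passage_count c c (j - 1) = s_coeff (Suc c) j"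
proof -
  define t where "t = Suc c * j - 1"
  have t: "c + Suc c * (j - 1) = t" "real (Suc c * j) - 1 = real t"
    using assms by (cases j; simp add: t_def)+
  have "t > 0" using assms by (cases j) (auto simp: t_def)
  then show ?thesis
    using passage_count_closed_form[of c c "j - 1"]
    unfolding t s_coeff_def t_def[symmetric] by (simp add: field_simps)
qed

definition first_passage_prob :: "nat \<Rightarrow> real \<Rightarrow> nat \<Rightarrow> nat \<Rightarrow> real" where
  "first_passage_prob c p D u = passage_count c D u * p ^ (D + c * u) * (1 - p) ^ u"

lemma first_passage_prob_0_left: "first_passage_prob c p 0 u = (if u = 0 then 1 else 0)"
  by (simp add: first_passage_prob_def passage_count_0_left)

lemma first_passage_prob_Suc_0: "first_passage_prob c p (Suc D) 0 = p * first_passage_prob c p D 0"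
  by (simp add: first_passage_prob_def)

lemma first_passage_prob_Suc_Suc:
  "first_passage_prob c p (Suc D) (Suc u) =
     p * first_passage_prob c p D (Suc u) + (1 - p) * first_passage_prob c p (Suc D + c) u"
proof -
  have "Suc D + c * Suc u = Suc (D + c * Suc u)" "Suc D + c * Suc u = Suc D + c + c * u" by simp_all
  then show ?thesis
    by (simp add: first_passage_prob_def passage_count_Suc_Suc algebra_simps)
qed

text \<open>balance_prob c p m D is the probability that the process with surplus D, run without
  stopping, is in a balanced state after exactly m steps at a smallest box; from a balanced
  state both kinds of step lead to surplus c.\<close>

fun balance_prob :: "nat \<Rightarrow> real \<Rightarrow> nat \<Rightarrow> nat \<Rightarrow> real" where
  "balance_prob c p 0 0 = 1"
| "balance_prob c p (Suc m) 0 = balance_prob c p m c"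
| "balance_prob c p 0 (Suc D) = p * balance_prob c p 0 D"
| "balance_prob c p (Suc m) (Suc D) =
     p * balance_prob c p (Suc m) D + (1 - p) * balance_prob c p m (Suc D + c)"

lemma balance_prob_first_passage:
  "balance_prob c p m D = (\<Sum>u\<le>m. first_passage_prob c p D u * balance_prob c p (m - u) 0)"
proof (induction c p m D rule: balance_prob.induct)
  case (4 c p m D)
  let ?h = "first_passage_prob c p" and ?K = "\<lambda>m. balance_prob c p m 0"
  have "(\<Sum>u\<le>Suc m. ?h (Suc D) u * ?K (Suc m - u))
      = p * ?h D 0 * ?K (Suc m)
        + (\<Sum>u\<le>m. p * (?h D (Suc u) * ?K (m - u)) + (1 - p) * (?h (Suc D + c) u * ?K (m - u)))"
    unfolding sum.atMost_Suc_shift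
    by (simp only: first_passage_prob_Suc_0 first_passage_prob_Suc_Suc distrib_right mult.assoc
        diff_Suc_Suc minus_nat.diff_0)
  also have "\<dots> = p * (\<Sum>u\<le>Suc m. ?h D u * ?K (Suc m - u))
      + (1 - p) * (\<Sum>u\<le>m. ?h (Suc D + c) u * ?K (m - u))"
    unfolding sum.atMost_Suc_shift by (simp add: sum.distrib sum_distrib_left distrib_left)
  finally show ?case using "4.IH" by simp
qed (simp_all add: first_passage_prob_0_left first_passage_prob_Suc_0 sum.atMost_Suc_shift
    del: sum.atMost_Suc)

lemma fps_inverse_one_minus_eq_Abs_fps:
  fixes R :: "'a::field fps"
  assumes "fps_nth R 0 = 0" and "g 0 = 1"
    and "\<And>i. g (Suc i) = (\<Sum>j\<le>Suc i. fps_nth R j * g (Suc i - j))"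
  shows "inverse (1 - R) = Abs_fps g"
proof (rule fps_inverse_unique)
  have "Abs_fps g = 1 + R * Abs_fps g"
  proof (rule fps_ext)
    fix i
    show "fps_nth (Abs_fps g) i = fps_nth (1 + R * Abs_fps g) i"
    proof (cases i)
      case 0
      then show ?thesis using assms(1,2) by (simp add: fps_mult_nth)
    next
      case (Suc j)
      have "fps_nth (Abs_fps g) (Suc j) = (\<Sum>k\<le>Suc j. fps_nth R k * g (Suc j - k))"
        by (simp only: fps_nth_Abs_fps assms(3))
      also have "\<dots> = fps_nth (1 + R * Abs_fps g) (Suc j)"
        by (simp add: fps_mult_nth atLeast0AtMost)
      finally show ?thesis using Suc by simp
    qed
  qed
  then show "(1 - R) * Abs_fps g = 1" by (simp add: algebra_simps)
qed

lemma balance_prob_eq_f_coeff: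
  assumes "c > 0" and "p \<noteq> 1"
  shows "balance_prob c p i 0 = f_coeff (Suc c) p i"
proof -
  define R where "R = fps_const (1 / (1 - p)) * (S_fps (Suc c) oo (fps_const (p ^ c * (1 - p)) * fps_X))"
  have R0: "fps_nth R 0 = 0" by (simp add: R_def S_fps_def)
  have R: "fps_nth R (Suc u) = first_passage_prob c p c u" for u
  proof -
    have "p ^ (c + c * u) = p ^ c * (p ^ c) ^ u" by (simp add: power_add power_mult)
    then show ?thesis
      using assms passage_count_eq_s_coeff[of c "Suc u"]
      by (simp add: R_def S_fps_def first_passage_prob_def power_mult_distrib)
  qed
  have "inverse (1 - R) = Abs_fps (\<lambda>i. balance_prob c p i 0)"
  proof (rule fps_inverse_one_minus_eq_Abs_fps)
    fix i
    have "balance_prob c p (Suc i) 0 = (\<Sum>u\<le>i. first_passage_prob c p c u * balance_prob c p (i - u) 0)"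
      using balance_prob_first_passage[of c p i c] by simp
    then show "balance_prob c p (Suc i) 0 = (\<Sum>j\<le>Suc i. fps_nth R j * balance_prob c p (Suc i - j) 0)"
      unfolding sum.atMost_Suc_shift by (simp add: R R0)
  qed (simp_all add: R0)
  then show ?thesis by (simp add: f_coeff_def R_def fps_eq_iff)
qed

definition even_split :: "nat \<Rightarrow> nat \<Rightarrow> nat multiset" where
  "even_split c R = replicate_mset (R mod c) (Suc (R div c)) + replicate_mset (c - R mod c) (R div c)"

lemma even_split_eq:
  "r < c \<Longrightarrow> even_split c (c * d + r) = replicate_mset r (Suc d) + replicate_mset (c - r) d"
  by (simp add: even_split_def)

lemma sum_mset_even_split:
  assumes "c > 0"
  shows "sum_mset (even_split c R) = R"
proof -
  have "R mod c * Suc (R div c) + (c - R mod c) * (R div c) = c * (R div c) + R mod c"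
    using assms by (simp add: algebra_simps diff_mult_distrib)
  then show ?thesis by (simp add: even_split_def)
qed

lemma even_split_lower_bound: "x \<in># even_split c R \<Longrightarrow> R div c \<le> x"
  by (auto simp: even_split_def split: if_splits)

lemma even_split_nonempty: "c > 0 \<Longrightarrow> even_split c R \<noteq> {#}"
  using mod_less_divisor[of c R] by (auto simp: even_split_def)

lemma dec_max_even_split:
  assumes "c > 0" and "R > 0"
  shows "dec_max (even_split c R) = even_split c (R - 1)"
proof -
  define d r where "d = R div c" and "r = R mod c"
  have R: "R = c * d + r" and "r < c" using assms by (simp_all add: d_def r_def)
  show ?thesis
  proof (cases r)
    case 0
    then obtain d' where d: "d = Suc d'" using R assms by (cases d) auto
    from \<open>c > 0\<close> obtain c' where c: "c = Suc c'" by (cases c) auto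
    have "R - 1 = c * d' + c'" using R 0 d c by simp
    then have "even_split c (R - 1) = add_mset d' (replicate_mset c' (Suc d'))"
      using even_split_eq[of c' c d'] c by simp
    moreover have "even_split c R = replicate_mset (Suc c') (Suc d')"
      using even_split_eq[of 0 c "Suc d'"] R 0 d c by simp
    ultimately show ?thesis by (simp add: dec_max_def)
  next
    case (Suc r')
    have "even_split c R = replicate_mset (Suc r') (Suc d) + replicate_mset (c - Suc r') d"
      using even_split_eq[of r c d] R Suc \<open>r < c\<close> by simp
    moreover have "even_split c (R - 1) = replicate_mset r' (Suc d) + replicate_mset (Suc (c - Suc r')) d"
      using even_split_eq[of r' c d] R Suc \<open>r < c\<close> by (simp add: Suc_diff_Suc)
    moreover have "Max (insert (Suc d) (if c - Suc r' = 0 then {} else {d})) = Suc d"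
      by simp
    ultimately show ?thesis by (simp add: dec_max_def)
  qed
qed

definition matchbox_state :: "nat \<Rightarrow> nat \<Rightarrow> nat \<Rightarrow> nat multiset" where
  "matchbox_state c L D = add_mset L (even_split c (c * L + D))"

lemma matchbox_state_balanced: "c > 0 \<Longrightarrow> matchbox_state c L 0 = replicate_mset (Suc c) L"
  by (simp add: matchbox_state_def even_split_def)

lemma sum_mset_matchbox_state: "c > 0 \<Longrightarrow> sum_mset (matchbox_state c L D) = L + c * L + D"
  by (simp add: matchbox_state_def sum_mset_even_split)

lemma matchbox_state_lower_bound: "c > 0 \<Longrightarrow> x \<in># matchbox_state c L D \<Longrightarrow> L \<le> x"
  using even_split_lower_bound[of x c "c * L + D"] by (auto simp: matchbox_state_def)

lemma Min_matchbox_state: "c > 0 \<Longrightarrow> Min (set_mset (matchbox_state c L D)) = L"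
  using matchbox_state_lower_bound by (intro Min_eqI) (auto simp: matchbox_state_def)

lemma dec_min_matchbox_state:
  assumes "c > 0"
  shows "dec_min (matchbox_state c (Suc L) D) = matchbox_state c L (D + c)"
  unfolding dec_min_def Min_matchbox_state[OF assms] by (simp add: matchbox_state_def algebra_simps)

lemma dec_max_add_mset:
  assumes "B \<noteq> {#}" and "L \<le> Max (set_mset B)"
  shows "dec_max (add_mset L B) = add_mset L (dec_max B)"
proof -
  let ?M = "Max (set_mset B)"
  have "?M \<in># B" using assms(1) by simp
  moreover have "Max (set_mset (add_mset L B)) = ?M" using assms by (simp add: max_absorb2)
  ultimately show ?thesis
    using diff_union_single_conv[of ?M B "{#L#}"] by (simp add: dec_max_def)
qed

lemma dec_max_matchbox_state:
  assumes "c > 0"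
  shows "dec_max (matchbox_state c L (Suc D)) = matchbox_state c L D"
proof -
  let ?B = "even_split c (c * L + Suc D)"
  have "?B \<noteq> {#}" using assms by (rule even_split_nonempty)
  then have "Max (set_mset ?B) \<in># ?B" by simp
  then have "(c * L + Suc D) div c \<le> Max (set_mset ?B)" by (rule even_split_lower_bound)
  moreover have "L \<le> (c * L + Suc D) div c"
    using assms by (metis div_le_mono div_mult_self1_is_m le_add1)
  ultimately have "dec_max (add_mset L ?B) = add_mset L (dec_max ?B)"
    using \<open>?B \<noteq> {#}\<close> by (simp add: dec_max_add_mset)
  then show ?thesis
    using assms by (simp add: matchbox_state_def dec_max_even_split)
qed

lemma dec_max_matchbox_state_balanced:
  assumes "c > 0"
  shows "dec_max (matchbox_state c (Suc L) 0) = matchbox_state c L c"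
proof -
  have "dec_max (matchbox_state c (Suc L) 0) = dec_min (matchbox_state c (Suc L) 0)"
    using assms by (simp add: matchbox_state_balanced dec_max_def dec_min_def)
  then show ?thesis using assms by (simp add: dec_min_matchbox_state)
qed

declare residue_pmf.simps [simp del]

definition expected_residue :: "real \<Rightarrow> nat multiset \<Rightarrow> real" where
  "expected_residue p s = measure_pmf.expectation (residue_pmf p s) real"

lemma finite_set_pmf_residue_pmf: "finite (set_pmf (residue_pmf p s))"
proof (induction p s rule: residue_pmf.induct)
  case (1 p s)
  then show ?case
    by (subst residue_pmf.simps) (auto simp: set_bind_pmf)
qed

lemma expected_residue_stop:
  "s = {#} \<or> 0 \<in># s \<Longrightarrow> expected_residue p s = real (sum_mset s)"
  unfolding expected_residue_def by (subst residue_pmf.simps) simp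

lemma expected_residue_step:
  assumes "0 \<le> p" "p \<le> 1" "s \<noteq> {#}" "0 \<notin># s"
  shows "expected_residue p s = p * expected_residue p (dec_max s) + (1 - p) * expected_residue p (dec_min s)"
proof -
  have "expected_residue p s = measure_pmf.expectation (bernoulli_pmf p \<bind>
      (\<lambda>b. if b then residue_pmf p (dec_max s) else residue_pmf p (dec_min s))) real"
    unfolding expected_residue_def using assms by (subst residue_pmf.simps) simp
  also have "\<dots> = (\<Sum>b\<in>UNIV. pmf (bernoulli_pmf p) b *\<^sub>R measure_pmf.expectation
      (if b then residue_pmf p (dec_max s) else residue_pmf p (dec_min s)) real)"
    by (rule pmf_expectation_bind) (simp_all add: finite_set_pmf_residue_pmf)
  also have "\<dots> = p * expected_residue p (dec_max s) + (1 - p) * expected_residue p (dec_min s)"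
    using assms by (simp add: UNIV_bool expected_residue_def)
  finally show ?thesis .
qed

lemma expected_residue_matchbox_state_step:
  assumes "c > 0" and "0 \<le> p" and "p \<le> 1"
  shows "expected_residue p (matchbox_state c (Suc L) D) =
    p * expected_residue p (dec_max (matchbox_state c (Suc L) D))
    + (1 - p) * expected_residue p (matchbox_state c L (D + c))"
proof -
  have "matchbox_state c (Suc L) D \<noteq> {#}" by (simp add: matchbox_state_def)
  moreover have "0 \<notin># matchbox_state c (Suc L) D"
    using matchbox_state_lower_bound[OF assms(1)] by fastforce
  ultimately show ?thesis
    using expected_residue_step[OF assms(2,3)] by (simp add: dec_min_matchbox_state[OF assms(1)])
qed

lemma sum_balance_prob_Suc:
  "(\<Sum>m<Suc L. balance_prob c p m (Suc D)) =
     p * (\<Sum>m<Suc L. balance_prob c p m D) + (1 - p) * (\<Sum>m<L. balance_prob c p m (Suc D + c))"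
  by (simp add: sum.lessThan_Suc_shift sum.distrib sum_distrib_left distrib_left del: sum.lessThan_Suc)

lemma sum_balance_prob_balanced:
  "(\<Sum>m<Suc L. balance_prob c p m 0) = 1 + (\<Sum>m<L. balance_prob c p m c)"
  by (simp add: sum.lessThan_Suc_shift del: sum.lessThan_Suc)

lemma affine_formula_step:
  fixes p r A x l d S1 S2 :: real
  assumes "(1 - p) * r = p" and "A = x - r"
  shows "p * (A * (1 + l) + d + r * S1) + (1 - p) * (A * l + (1 + d + x) + r * S2)
    = A * (1 + l) + (1 + d) + r * (p * S1 + (1 - p) * S2)"
proof -
  have "p * (A * (1 + l) + d + r * S1) + (1 - p) * (A * l + (1 + d + x) + r * S2)
      - (A * (1 + l) + (1 + d) + r * (p * S1 + (1 - p) * S2)) = (1 - p) * r - p"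
    unfolding assms(2) by (simp add: algebra_simps)
  then show ?thesis using assms(1) by simp
qed

lemma expected_residue_matchbox_state:
  assumes "c > 0" and "0 \<le> p" and "p < 1"
  shows "expected_residue p (matchbox_state c L D) =
    (real c - p / (1 - p)) * real L + real D + p / (1 - p) * (\<Sum>m<L. balance_prob c p m D)"
proof (induction L arbitrary: D)
  case 0
  have "0 \<in># matchbox_state c 0 D" by (simp add: matchbox_state_def)
  then show ?case
    using sum_mset_matchbox_state[OF assms(1), of 0 D] by (simp add: expected_residue_stop)
next
  case (Suc L)
  note outer_IH = Suc.IH
  note step = expected_residue_matchbox_state_step[OF assms(1,2) less_imp_le[OF assms(3)], of L]
  let ?A = "real c - p / (1 - p)" and ?r = "p / (1 - p)"
  have "(1 - p) * ?r = p" using assms(3) by simp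
  show ?case
  proof (induction D)
    case 0
    have "expected_residue p (matchbox_state c (Suc L) 0) = expected_residue p (matchbox_state c L c)"
      using step[of 0] assms(1) by (simp add: dec_max_matchbox_state_balanced algebra_simps)
    also have "\<dots> = ?A * real L + real c + ?r * (\<Sum>m<L. balance_prob c p m c)"
      by (rule outer_IH)
    also have "\<dots> = ?A * real (Suc L) + real 0 + ?r * (\<Sum>m<Suc L. balance_prob c p m 0)"
      unfolding sum_balance_prob_balanced by (simp add: algebra_simps add_divide_distrib)
    finally show ?case .
  next
    case (Suc D)
    have "expected_residue p (matchbox_state c (Suc L) (Suc D)) =
        p * expected_residue p (matchbox_state c (Suc L) D)
        + (1 - p) * expected_residue p (matchbox_state c L (Suc D + c))"
      using step[of "Suc D"] assms(1) by (simp add: dec_max_matchbox_state)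
    also have "\<dots> = p * (?A * real (Suc L) + real D + ?r * (\<Sum>m<Suc L. balance_prob c p m D))
        + (1 - p) * (?A * real L + real (Suc D + c) + ?r * (\<Sum>m<L. balance_prob c p m (Suc D + c)))"
      by (simp only: Suc.IH outer_IH)
    also have "\<dots> = ?A * real (Suc L) + real (Suc D)
        + ?r * (p * (\<Sum>m<Suc L. balance_prob c p m D) + (1 - p) * (\<Sum>m<L. balance_prob c p m (Suc D + c)))"
      unfolding of_nat_Suc of_nat_add by (rule affine_formula_step[OF \<open>(1 - p) * ?r = p\<close>]) simp
    finally show ?case
      unfolding sum_balance_prob_Suc .
  qed
qed

theorem proposition3p4:
  fixes k n :: nat and p :: real
  assumes "k \<ge> 2" and "0 < p" and "p < 1" and "n \<ge> 1"
  shows "M k n p = real ((k - 1) * n) - p / (1 - p) * (\<Sum>i<n. (1 - f_coeff k p i))"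
proof -
  define c where "c = k - 1"
  have "c > 0" and k: "k = Suc c" using assms(1) by (simp_all add: c_def)
  have "M k n p = expected_residue p (matchbox_state c n 0)"
    using \<open>c > 0\<close> by (simp add: M_def expected_residue_def matchbox_state_balanced k)
  also have "\<dots> = (real c - p / (1 - p)) * real n + p / (1 - p) * (\<Sum>m<n. f_coeff k p m)"
    using expected_residue_matchbox_state[OF \<open>c > 0\<close>] balance_prob_eq_f_coeff[OF \<open>c > 0\<close>]
      assms(2,3) k by simp
  also have "\<dots> = real ((k - 1) * n) - p / (1 - p) * (\<Sum>i<n. (1 - f_coeff k p i))"
    unfolding c_def[symmetric] of_nat_mult by (simp add: sum_subtractf algebra_simps)
  finally show ?thesis .
qed

end
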